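(* Assume that $\gamma(s)>0$ for every $s\in S$. Fix a stationary policy $f$ and a cost vector $c\in\mathbb{R}^{|\mathcal{K}|}$. Consider the problem $$(\mathrm{I})\qquad \max_{\mathfrak{u}\in\mathfrak{U}}\ (1-\alpha)\,\gamma^T\big(I-\alpha P_f(\mathfrak{u})\big)^{-1}c_f,$$ and the second-order cone program $$(\mathrm{II})\qquad \max_{\mathfrak{w}_c,\ \mathfrak{z}_c}\ \mathfrak{w}_c^T c_f$$ subject to, for all $s\in S$, $$B(s)\,z_c(\cdot\mid s,\cdot)-b(s)\,w_c(s)\le 0,$$ $$\big\|M(s)^T z_c(\cdot\mid s,\cdot)+m(s)\,w_c(s)\big\|_2\le x(s)^T z_c(\cdot\mid s,\cdot)+y(s)\,w_c(s),$$ and $$\mathfrak{w}_c\ge(1-\alpha)\gamma,\qquad \mathfrak{w}_c^T(I-\alpha\bar P_f)-\alpha\sum_{s\in S} z_c(\cdot\mid s,\cdot)^T F_f(s)=(1-\alpha)\gamma^T,$$ where $\mathfrak{w}_c=(w_c(s))_{s\in S}\in\mathbb{R}^{|S|}$ and $\mathfrak{z}_c=(z_c(s'\mid s,a))_{(s,a,s')\in\mathcal{H}}$ with $z_c(\cdot\mid s,\cdot)=(z_c(s'\mid s,a))_{(a,s')\in A(s)\times S}\in\mathbb{R}^{|A(s)||S|}$. Then problems (I) and (II) are equivalent. That is, for every feasible $\mathfrak{u}$ of (I) there is a feasible $(\mathfrak{w}_c,\mathfrak{z}_c)$ of (II) with the same objective value, and conversely. In particular, their optimal values coincide.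
   Context: Setting. Let $S$ be a finite nonempty set of states. For each $s\in S$, let $A(s)$ be a finite nonempty set of actions. Put $\mathcal{K}=\{(s,a): s\in S,\ a\in A(s)\}$ and $\mathcal{H}=\{(s,a,s'): (s,a)\in\mathcal{K},\ s'\in S\}$. Let $\alpha\in(0,1)$ be a discount factor, and let $\gamma=(\gamma(s))_{s\in S}$ be a probability distribution on $S$ (the initial distribution). Let $\bar p(s'\mid s,a)\ge 0$, for $(s,a,s')\in\mathcal{H}$, be observed transition probabilities with $\sum_{s'\in S}\bar p(s'\mid s,a)=1$. Uncertainty. The true transition probabilities are $p(s'\mid s,a)=\bar p(s'\mid s,a)+u(s'\mid s,a)$, where the uncertain vector is $\mathfrak{u}=(u(s'\mid s,a))_{(s,a,s')\in\mathcal{H}}$. For $s\in S$, write $u(\cdot\mid s,\cdot)=(u(s'\mid s,a))_{(a,s')\in A(s)\times S}\in\mathbb{R}^{|A(s)||S|}$. The uncertainty set is $$\mathfrak{U}=\Big\{\mathfrak{u} : B(s)u(\cdot\mid s,\cdot)-b(s)\le 0,\ \|M(s)^Tu(\cdot\mid s,\cdot)+m(s)\|_2\le x(s)^Tu(\cdot\mid s,\cdot)+y(s)\ \ \forall s\in S\Big\}.$$ Here $B(s)\in\mathbb{R}^{\ell_p(s)\times|A(s)||S|}$, $b(s)\in\mathbb{R}^{\ell_p(s)}$, $M(s)\in\mathbb{R}^{|A(s)||S|\times \ell_{sc}(s)}$, $m(s)\in\mathbb{R}^{\ell_{sc}(s)}$, $x(s)\in\mathbb{R}^{|A(s)||S|}$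 and $y(s)\in\mathbb{R}$. The polyhedral constraints $B(s)u(\cdot\mid s,\cdot)\le b(s)$ include the conditions $\underline u(s'\mid s,a)\le u(s'\mid s,a)\le \bar u(s'\mid s,a)$ and $\sum_{s'\in S}u(s'\mid s,a)=0$ for all $(s,a,s')\in\mathcal{H}$. The bounds are such that $\bar p+\mathfrak{u}$ remains a vector of transition probabilities. Policies and matrices. A stationary policy is $f=(f(s,a))_{(s,a)\in\mathcal{K}}$ with $f(s,a)\ge0$ and $\sum_{a\in A(s)}f(s,a)=1$ for each $s$. - $P_f(\mathfrak{u})$ is the $|S|\times|S|$ matrix with $(s,s')$ entry $\sum_{a\in A(s)}f(s,a)\big(\bar p(s'\mid s,a)+u(s'\mid s,a)\big)$. - $\bar P_f$ is the $|S|\times|S|$ matrix with $(s,s')$ entry $\sum_{a\in A(s)}f(s,a)\bar p(s'\mid s,a)$. - For a cost vector $c=(c(s,a))_{(s,a)\in\mathcal{K}}$, $c_f\in\mathbb{R}^{|S|}$ has entries $c_f(s)=\sum_{a\in A(s)}f(s,a)c(s,a)$. - $F_f(s)$ is the $(|A(s)||S|)\times|S|$ matrix such that $v^T F_f(s)e_{s'}=\sum_{a\in A(s)}f(s,a)\,v(s'\mid s,a)$ for every $v=(v(s'\mid s,a))_{(a,s')\in A(s)\times S}$. - $e_{s}$ denotes the $s$-th standard unit vector in $\mathbb{R}^{|S|}$, and $I$ is the $|S|\times|S|$ identity matrix. *)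

theory Defs
  imports "HOL-Analysis.Analysis"
begin

text \<open>A vector v(.|s,.) in R^{|A(s)||S|} is represented as a function of (a,s') on A s \<times> UNIV.
 A matrix with rows indexed by i < l is a function i \<mapsto> (a,s') \<mapsto> entry.
 Uncertain vector u and the variable z are functions s \<mapsto> a \<mapsto> s' \<mapsto> value.\<close>

definition lin :: "('s::finite \<Rightarrow> 'act set) \<Rightarrow> 's \<Rightarrow> ('act \<times> 's \<Rightarrow> real) \<Rightarrow> ('act \<times> 's \<Rightarrow> real) \<Rightarrow> real" where
  "lin A s r v = (\<Sum>p\<in>A s \<times> UNIV. r p * v p)"

definition in_U ::
  "('s::finite \<Rightarrow> 'act set) \<Rightarrow> ('s \<Rightarrow> nat) \<Rightarrow> ('s \<Rightarrow> nat \<Rightarrow> 'act \<times> 's \<Rightarrow> real) \<Rightarrow> ('s \<Rightarrow> nat \<Rightarrow> real)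
   \<Rightarrow> ('s \<Rightarrow> nat) \<Rightarrow> ('s \<Rightarrow> 'act \<times> 's \<Rightarrow> nat \<Rightarrow> real) \<Rightarrow> ('s \<Rightarrow> nat \<Rightarrow> real)
   \<Rightarrow> ('s \<Rightarrow> 'act \<times> 's \<Rightarrow> real) \<Rightarrow> ('s \<Rightarrow> real) \<Rightarrow> ('s \<Rightarrow> 'act \<Rightarrow> 's \<Rightarrow> real) \<Rightarrow> bool" where
  "in_U A lp B b lsc M m x y u \<longleftrightarrow>
     (\<forall>s. (\<forall>i<lp s. lin A s (B s i) (\<lambda>(a,s'). u s a s') - b s i \<le> 0) \<and>
          sqrt (\<Sum>j<lsc s. (lin A s (\<lambda>p. M s p j) (\<lambda>(a,s'). u s a s') + m s j)\<^sup>2)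
            \<le> lin A s (x s) (\<lambda>(a,s'). u s a s') + y s)"

text \<open>P_f(u) (with u = 0 this is \<open>P\<close>-bar_f).\<close>
definition Pf :: "('s::finite \<Rightarrow> 'act set) \<Rightarrow> ('s \<Rightarrow> 'act \<Rightarrow> real) \<Rightarrow> ('s \<Rightarrow> 'act \<Rightarrow> 's \<Rightarrow> real)
    \<Rightarrow> ('s \<Rightarrow> 'act \<Rightarrow> 's \<Rightarrow> real) \<Rightarrow> real^'s^'s" where
  "Pf A f pbar u = (\<chi> s s'. \<Sum>a\<in>A s. f s a * (pbar s a s' + u s a s'))"

definition cf :: "('s::finite \<Rightarrow> 'act set) \<Rightarrow> ('s \<Rightarrow> 'act \<Rightarrow> real) \<Rightarrow> ('s \<Rightarrow> 'act \<Rightarrow> real) \<Rightarrow> real^'s" where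
  "cf A f c = (\<chi> s. \<Sum>a\<in>A s. f s a * c s a)"

definition objI :: "('s::finite \<Rightarrow> 'act set) \<Rightarrow> real \<Rightarrow> real^'s \<Rightarrow> ('s \<Rightarrow> 'act \<Rightarrow> real) \<Rightarrow> ('s \<Rightarrow> 'act \<Rightarrow> 's \<Rightarrow> real)
    \<Rightarrow> ('s \<Rightarrow> 'act \<Rightarrow> real) \<Rightarrow> ('s \<Rightarrow> 'act \<Rightarrow> 's \<Rightarrow> real) \<Rightarrow> real" where
  "objI A \<alpha> \<gamma> f pbar c u = (1 - \<alpha>) * (\<gamma> \<bullet> (matrix_inv (mat 1 - \<alpha> *\<^sub>R Pf A f pbar u) *v cf A f c))"

definition feasII ::
  "('s::finite \<Rightarrow> 'act set) \<Rightarrow> real \<Rightarrow> real^'s \<Rightarrow> ('s \<Rightarrow> 'act \<Rightarrow> real) \<Rightarrow> ('s \<Rightarrow> 'act \<Rightarrow> 's \<Rightarrow> real)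
   \<Rightarrow> ('s \<Rightarrow> nat) \<Rightarrow> ('s \<Rightarrow> nat \<Rightarrow> 'act \<times> 's \<Rightarrow> real) \<Rightarrow> ('s \<Rightarrow> nat \<Rightarrow> real)
   \<Rightarrow> ('s \<Rightarrow> nat) \<Rightarrow> ('s \<Rightarrow> 'act \<times> 's \<Rightarrow> nat \<Rightarrow> real) \<Rightarrow> ('s \<Rightarrow> nat \<Rightarrow> real)
   \<Rightarrow> ('s \<Rightarrow> 'act \<times> 's \<Rightarrow> real) \<Rightarrow> ('s \<Rightarrow> real)
   \<Rightarrow> real^'s \<Rightarrow> ('s \<Rightarrow> 'act \<Rightarrow> 's \<Rightarrow> real) \<Rightarrow> bool" where
  "feasII A \<alpha> \<gamma> f pbar lp B b lsc M m x y w z \<longleftrightarrow>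
     (\<forall>s. (\<forall>i<lp s. lin A s (B s i) (\<lambda>(a,s'). z s a s') - b s i * w $ s \<le> 0) \<and>
          sqrt (\<Sum>j<lsc s. (lin A s (\<lambda>p. M s p j) (\<lambda>(a,s'). z s a s') + m s j * w $ s)\<^sup>2)
            \<le> lin A s (x s) (\<lambda>(a,s'). z s a s') + y s * w $ s) \<and>
     (\<forall>s. w $ s \<ge> (1 - \<alpha>) * \<gamma> $ s) \<and>
     (\<forall>s'. w $ s' - \<alpha> * (\<Sum>s\<in>UNIV. w $ s * Pf A f pbar (\<lambda>_ _ _. 0) $ s $ s')
            - \<alpha> * (\<Sum>s\<in>UNIV. \<Sum>a\<in>A s. f s a * z s a s') = (1 - \<alpha>) * \<gamma> $ s')"

definition objII :: "('s::finite \<Rightarrow> 'act set) \<Rightarrow> ('s \<Rightarrow> 'act \<Rightarrow> real) \<Rightarrow> ('s \<Rightarrow> 'act \<Rightarrow> real) \<Rightarrow> real^'s \<Rightarrow> real" where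
  "objII A f c w = w \<bullet> cf A f c"

end

theory Submission
  imports Defs
begin

text \<open>For a fixed \<open>u\<close> the matrix \<open>P_f(u)\<close> is stochastic, so \<open>I - \<alpha> P_f(u)\<close> is invertible
  and, by a discrete maximum principle, its inverse is entrywise nonnegative. The objective of (I)
  is therefore \<open>w\<^sup>T c_f\<close> for the discounted occupation vector \<open>w\<^sup>T = (1-\<alpha>) \<gamma>\<^sup>T (I - \<alpha> P_f(u))\<^sup>-\<^sup>1\<close>,
  the unique solution of \<open>w\<^sup>T (I - \<alpha> P_f(u)) = (1-\<alpha>) \<gamma>\<^sup>T\<close>, and \<open>w = (1-\<alpha>) \<gamma> + \<alpha> P_f(u)\<^sup>T w \<ge> (1-\<alpha>) \<gamma> > 0\<close>.
  The substitution \<open>z(s'|s,a) = w(s) u(s'|s,a)\<close> then matches the feasible points of (I) and (II):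
  the polyhedral and conic constraints defining U are positively homogeneous, so multiplying them
  by \<open>w(s) > 0\<close> gives those of (II), and since \<open>P_f(u)\<close> is the nominal matrix plus a term linear
  in \<open>u\<close>, the linear equality of (II) is exactly the occupation equation.\<close>

lemma vector_matrix_mult_discount_component:
  fixes P :: "real^'n::finite^'n"
  shows "(w v* (mat 1 - \<alpha> *\<^sub>R P)) $ t = w $ t - \<alpha> * (\<Sum>s\<in>UNIV. w $ s * P $ s $ t)"
  unfolding vector_matrix_mult_diff_rdistrib vector_matrix_mul_rid vector_scaleR_matrix_ac
  by (simp add: vector_matrix_mult_def mult.commute)

lemma matrix_vector_mult_discount_component:
  fixes P :: "real^'n::finite^'n"
  shows "((mat 1 - \<alpha> *\<^sub>R P) *v v) $ s = v $ s - \<alpha> * (\<Sum>t\<in>UNIV. P $ s $ t * v $ t)"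
  by (simp add: matrix_vector_mult_diff_rdistrib flip: scaleR_matrix_vector_assoc)
     (simp add: matrix_vector_mult_def)

lemma matrix_inv_inverse:
  assumes "invertible A"
  shows "A ** matrix_inv A = mat 1" and "matrix_inv A ** A = mat 1"
  using someI_ex[OF assms[unfolded invertible_def]] unfolding matrix_inv_def by auto

lemma vector_matrix_eq_iff_matrix_inv:
  assumes "invertible A"
  shows "x v* A = y \<longleftrightarrow> x = y v* matrix_inv A"
  by (metis assms matrix_inv_inverse vector_matrix_mul_assoc vector_matrix_mul_rid)

definition substochastic :: "real^'n::finite^'n \<Rightarrow> bool" where
  "substochastic P \<longleftrightarrow> (\<forall>i j. 0 \<le> P $ i $ j) \<and> (\<forall>i. (\<Sum>j\<in>UNIV. P $ i $ j) \<le> 1)"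

text \<open>Discrete maximum principle: if a minimal entry \<open>v\<^sub>k\<close> were negative, substochasticity
  would give \<open>v\<^sub>k \<ge> \<alpha> \<Sum>\<^sub>j P\<^sub>k\<^sub>j v\<^sub>j \<ge> \<alpha> v\<^sub>k\<close>, impossible for \<open>\<alpha> < 1\<close>.\<close>
lemma substochastic_discount_nonneg:
  fixes P :: "real^'n::finite^'n"
  assumes P: "substochastic P" and \<alpha>: "0 \<le> \<alpha>" "\<alpha> < 1"
    and nonneg: "\<And>s. 0 \<le> ((mat 1 - \<alpha> *\<^sub>R P) *v v) $ s"
  shows "0 \<le> v $ i"
proof (rule ccontr)
  define k where "k = arg_min_on (($) v) UNIV"
  have k_min: "v $ k \<le> v $ j" for j
    unfolding k_def by (rule arg_min_least) simp_all
  assume "\<not> 0 \<le> v $ i"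
  with k_min have neg: "v $ k < 0" by (meson not_le order_le_less_trans)
  have "v $ k \<le> v $ k * (\<Sum>j\<in>UNIV. P $ k $ j)"
    using P neg unfolding substochastic_def by (simp add: mult_le_cancel_left1)
  also have "\<dots> \<le> (\<Sum>j\<in>UNIV. P $ k $ j * v $ j)"
    unfolding sum_distrib_left
    using P k_min by (intro sum_mono) (simp add: substochastic_def mult.commute mult_right_mono)
  finally have "\<alpha> * v $ k \<le> \<alpha> * (\<Sum>j\<in>UNIV. P $ k $ j * v $ j)"
    using \<alpha> by (simp add: mult_left_mono)
  also have "\<dots> \<le> v $ k"
    using nonneg[of k] by (simp add: matrix_vector_mult_discount_component)
  finally have "0 \<le> (1 - \<alpha>) * v $ k" by (simp add: algebra_simps)
  with mult_pos_neg[of "1 - \<alpha>" "v $ k"] neg \<alpha> show False by linarith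
qed

lemma invertible_discount:
  fixes P :: "real^'n::finite^'n"
  assumes "substochastic P" "0 \<le> \<alpha>" "\<alpha> < 1"
  shows "invertible (mat 1 - \<alpha> *\<^sub>R P)"
  unfolding invertible_left_inverse matrix_left_invertible_ker
proof (intro allI impI)
  fix v assume kernel: "(mat 1 - \<alpha> *\<^sub>R P) *v v = 0"
  then have "(mat 1 - \<alpha> *\<^sub>R P) *v (- v) = 0"
    using matrix_vector_mult_diff_distrib[of "mat 1 - \<alpha> *\<^sub>R P" 0 v] by simp
  with kernel have "0 \<le> v $ i" "0 \<le> (- v) $ i" for i
    by (metis substochastic_discount_nonneg[OF assms] order_refl zero_index)+
  then show "v = 0" by (simp add: vec_eq_iff eq_iff)
qed

lemma discount_inverse_nonneg:
  fixes P :: "real^'n::finite^'n"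
  assumes "substochastic P" "0 \<le> \<alpha>" "\<alpha> < 1" and "\<And>s. 0 \<le> h $ s"
  shows "0 \<le> (matrix_inv (mat 1 - \<alpha> *\<^sub>R P) *v h) $ i"
  by (rule substochastic_discount_nonneg[OF assms(1-3)])
     (simp add: matrix_vector_mul_assoc matrix_inv_inverse invertible_discount assms)

lemma discounted_occupation_ge:
  fixes P :: "real^'n::finite^'n"
  assumes P: "substochastic P" and \<alpha>: "0 \<le> \<alpha>" "\<alpha> < 1"
    and g_nonneg: "\<And>s. 0 \<le> g $ s" and balance: "w v* (mat 1 - \<alpha> *\<^sub>R P) = g"
  shows "g $ t \<le> w $ t"
proof -
  have w_eq: "w = g v* matrix_inv (mat 1 - \<alpha> *\<^sub>R P)"
    using balance invertible_discount[OF P \<alpha>] by (simp add: vector_matrix_eq_iff_matrix_inv)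
  have w_nonneg: "0 \<le> w $ s" for s
  proof -
    have "w $ s = g \<bullet> (matrix_inv (mat 1 - \<alpha> *\<^sub>R P) *v axis s 1)"
      by (simp add: w_eq cart_eq_inner_axis dot_lmul_matrix)
    also have "0 \<le> \<dots>"
      unfolding inner_vec_def using g_nonneg discount_inverse_nonneg[OF P \<alpha>, of "axis s 1"]
      by (intro sum_nonneg) (simp add: axis_def)
    finally show ?thesis .
  qed
  have "g $ t = w $ t - \<alpha> * (\<Sum>s\<in>UNIV. w $ s * P $ s $ t)"
    using balance vector_matrix_mult_discount_component by metis
  moreover have "0 \<le> (\<Sum>s\<in>UNIV. w $ s * P $ s $ t)"
    using w_nonneg P unfolding substochastic_def by (simp add: sum_nonneg)
  ultimately show ?thesis using \<alpha> mult_nonneg_nonneg[of \<alpha>] by fastforce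
qed

lemma lin_scaled:
  "lin A s r (\<lambda>(a, s'). k * u a s') = k * lin A s r (\<lambda>(a, s'). u a s')"
  unfolding lin_def by (simp add: sum_distrib_left case_prod_beta algebra_simps)

lemma lin_scaled_le_iff:
  fixes k :: real
  assumes "0 < k"
  shows "lin A s r (\<lambda>(a, s'). k * u a s') - b * k \<le> 0 \<longleftrightarrow> lin A s r (\<lambda>(a, s'). u a s') - b \<le> 0"
proof -
  have "lin A s r (\<lambda>(a, s'). k * u a s') - b * k = k * (lin A s r (\<lambda>(a, s'). u a s') - b)"
    by (simp add: lin_scaled algebra_simps)
  with assms show ?thesis by (simp add: mult_le_0_iff)
qed

lemma soc_scaled_le_iff:
  fixes k :: real
  assumes k: "0 < k"
  shows "sqrt (\<Sum>j<n. (lin A s (\<lambda>p. M p j) (\<lambda>(a, s'). k * u a s') + m j * k)\<^sup>2)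
           \<le> lin A s x (\<lambda>(a, s'). k * u a s') + y * k
     \<longleftrightarrow> sqrt (\<Sum>j<n. (lin A s (\<lambda>p. M p j) (\<lambda>(a, s'). u a s') + m j)\<^sup>2)
           \<le> lin A s x (\<lambda>(a, s'). u a s') + y"
proof -
  have "(\<Sum>j<n. (lin A s (\<lambda>p. M p j) (\<lambda>(a, s'). k * u a s') + m j * k)\<^sup>2)
      = k\<^sup>2 * (\<Sum>j<n. (lin A s (\<lambda>p. M p j) (\<lambda>(a, s'). u a s') + m j)\<^sup>2)"
    by (simp add: lin_scaled sum_distrib_left power2_eq_square algebra_simps)
  then have "sqrt (\<Sum>j<n. (lin A s (\<lambda>p. M p j) (\<lambda>(a, s'). k * u a s') + m j * k)\<^sup>2)
      = k * sqrt (\<Sum>j<n. (lin A s (\<lambda>p. M p j) (\<lambda>(a, s'). u a s') + m j)\<^sup>2)"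
    using k by (simp add: real_sqrt_mult)
  moreover have "lin A s x (\<lambda>(a, s'). k * u a s') + y * k = k * (lin A s x (\<lambda>(a, s'). u a s') + y)"
    by (simp add: lin_scaled algebra_simps)
  ultimately show ?thesis using k by simp
qed

lemma Pf_eq_Pf_zero_add:
  "Pf A f pbar u $ s $ t = Pf A f pbar (\<lambda>_ _ _. 0) $ s $ t + (\<Sum>a\<in>A s. f s a * u s a t)"
  by (simp add: Pf_def distrib_left sum.distrib)

lemma substochastic_Pf:
  assumes f_nonneg: "\<And>s a. a \<in> A s \<Longrightarrow> 0 \<le> f s a" and f_sum: "\<And>s. (\<Sum>a\<in>A s. f s a) = 1"
    and p_nonneg: "\<And>s a t. a \<in> A s \<Longrightarrow> 0 \<le> pbar s a t + u s a t"
    and p_sum: "\<And>s a. a \<in> A s \<Longrightarrow> (\<Sum>t\<in>UNIV. pbar s a t + u s a t) = 1"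
  shows "substochastic (Pf A f pbar u)"
proof -
  have "(\<Sum>t\<in>UNIV. Pf A f pbar u $ s $ t) = (\<Sum>a\<in>A s. f s a * (\<Sum>t\<in>UNIV. pbar s a t + u s a t))" for s
    unfolding Pf_def by (simp add: sum_distrib_left sum.swap[of _ UNIV])
  also have "\<dots> s = 1" for s
    using f_sum p_sum by simp
  finally show ?thesis
    unfolding substochastic_def Pf_def using f_nonneg p_nonneg by (auto intro!: sum_nonneg)
qed

locale robust_policy_evaluation =
  fixes A :: "'s::finite \<Rightarrow> 'act set" and \<alpha> :: real and \<gamma> :: "real^'s"
    and pbar :: "'s \<Rightarrow> 'act \<Rightarrow> 's \<Rightarrow> real"
    and lp :: "'s \<Rightarrow> nat" and B :: "'s \<Rightarrow> nat \<Rightarrow> 'act \<times> 's \<Rightarrow> real" and b :: "'s \<Rightarrow> nat \<Rightarrow> real"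
    and lsc :: "'s \<Rightarrow> nat" and M :: "'s \<Rightarrow> 'act \<times> 's \<Rightarrow> nat \<Rightarrow> real" and m :: "'s \<Rightarrow> nat \<Rightarrow> real"
    and x :: "'s \<Rightarrow> 'act \<times> 's \<Rightarrow> real" and y :: "'s \<Rightarrow> real"
    and f :: "'s \<Rightarrow> 'act \<Rightarrow> real"
  assumes alpha: "0 < \<alpha>" "\<alpha> < 1"
    and gamma_pos: "\<And>s. 0 < \<gamma> $ s"
    and pbar_sum: "\<And>s a. a \<in> A s \<Longrightarrow> (\<Sum>s'\<in>UNIV. pbar s a s') = 1"
    and poly_incl: "\<And>s v. (\<forall>i<lp s. lin A s (B s i) v - b s i \<le> 0) \<Longrightarrow>
        (\<forall>a\<in>A s. (\<Sum>s'\<in>UNIV. v (a, s')) = 0) \<and> (\<forall>a\<in>A s. \<forall>s'. pbar s a s' + v (a, s') \<ge> 0)"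
    and f_nonneg: "\<And>s a. a \<in> A s \<Longrightarrow> 0 \<le> f s a"
    and f_sum: "\<And>s. (\<Sum>a\<in>A s. f s a) = 1"
begin

abbreviation U :: "('s \<Rightarrow> 'act \<Rightarrow> 's \<Rightarrow> real) \<Rightarrow> bool" where
  "U \<equiv> in_U A lp B b lsc M m x y"

abbreviation feasible :: "real^'s \<Rightarrow> ('s \<Rightarrow> 'act \<Rightarrow> 's \<Rightarrow> real) \<Rightarrow> bool" where
  "feasible \<equiv> feasII A \<alpha> \<gamma> f pbar lp B b lsc M m x y"

abbreviation discount :: "('s \<Rightarrow> 'act \<Rightarrow> 's \<Rightarrow> real) \<Rightarrow> real^'s^'s" where
  "discount u \<equiv> mat 1 - \<alpha> *\<^sub>R Pf A f pbar u"

lemma substochastic_Pf_of_U: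
  assumes "U u"
  shows "substochastic (Pf A f pbar u)"
proof (rule substochastic_Pf[OF f_nonneg f_sum])
  fix s a assume "a \<in> A s"
  moreover have "(\<forall>a\<in>A s. (\<Sum>t\<in>UNIV. u s a t) = 0) \<and> (\<forall>a\<in>A s. \<forall>t. 0 \<le> pbar s a t + u s a t)"
    using assms poly_incl[of s "\<lambda>(a, t). u s a t"] unfolding in_U_def by simp
  ultimately show "0 \<le> pbar s a t + u s a t" "(\<Sum>t\<in>UNIV. pbar s a t + u s a t) = 1" for t
    using pbar_sum by (simp_all add: sum.distrib)
qed

lemma occupation_pos:
  assumes "(1 - \<alpha>) * \<gamma> $ s \<le> w $ s"
  shows "0 < w $ s"
  using assms alpha gamma_pos[of s] by (smt (verit) mult_pos_pos)

lemma feasible_scaled_iff: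
  assumes w_pos: "\<And>s. 0 < w $ s"
  shows "feasible w (\<lambda>s a s'. w $ s * u s a s') \<longleftrightarrow>
    U u \<and> (\<forall>s. (1 - \<alpha>) * \<gamma> $ s \<le> w $ s) \<and> w v* discount u = (1 - \<alpha>) *\<^sub>R \<gamma>"
proof -
  have component: "(w v* discount u) $ t = w $ t - \<alpha> * (\<Sum>s\<in>UNIV. w $ s * Pf A f pbar (\<lambda>_ _ _. 0) $ s $ t)
      - \<alpha> * (\<Sum>s\<in>UNIV. \<Sum>a\<in>A s. f s a * (w $ s * u s a t))" for t
    by (simp add: vector_matrix_mult_discount_component Pf_eq_Pf_zero_add[of _ _ _ u]
        distrib_left sum.distrib sum_distrib_left mult.left_commute right_diff_distrib)
  show ?thesis
    unfolding feasII_def in_U_def vec_eq_iff component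
    by (simp only: lin_scaled_le_iff[OF w_pos] soc_scaled_le_iff[OF w_pos]) auto
qed

lemma objI_eq_objII:
  assumes u: "U u" and balance: "w v* discount u = (1 - \<alpha>) *\<^sub>R \<gamma>"
  shows "objI A \<alpha> \<gamma> f pbar c u = objII A f c w"
proof -
  have "invertible (discount u)"
    using invertible_discount[OF substochastic_Pf_of_U[OF u]] alpha by simp
  with balance have "w = ((1 - \<alpha>) *\<^sub>R \<gamma>) v* matrix_inv (discount u)"
    by (simp add: vector_matrix_eq_iff_matrix_inv)
  then show ?thesis unfolding objI_def objII_def by (simp add: dot_lmul_matrix)
qed

lemma exists_feasible_same_value:
  assumes u: "U u"
  shows "\<exists>w z. feasible w z \<and> objII A f c w = objI A \<alpha> \<gamma> f pbar c u"
proof -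
  have P: "substochastic (Pf A f pbar u)" by (rule substochastic_Pf_of_U[OF u])
  define w where "w = ((1 - \<alpha>) *\<^sub>R \<gamma>) v* matrix_inv (discount u)"
  have balance: "w v* discount u = (1 - \<alpha>) *\<^sub>R \<gamma>"
    using invertible_discount[OF P] alpha by (simp add: w_def vector_matrix_eq_iff_matrix_inv)
  have w_ge: "(1 - \<alpha>) * \<gamma> $ s \<le> w $ s" for s
    using discounted_occupation_ge[OF P _ _ _ balance] alpha gamma_pos by (simp add: less_imp_le)
  then have "feasible w (\<lambda>s a s'. w $ s * u s a s')"
    using feasible_scaled_iff occupation_pos u balance by blast
  with objI_eq_objII[OF u balance] show ?thesis by auto
qed

lemma exists_U_same_value:
  assumes feas: "feasible w z"
  shows "\<exists>u. U u \<and> objI A \<alpha> \<gamma> f pbar c u = objII A f c w"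
proof -
  have w_pos: "0 < w $ s" for s
    using feas occupation_pos unfolding feasII_def by blast
  define u where "u s a s' = z s a s' / w $ s" for s a s'
  have "z = (\<lambda>s a s'. w $ s * u s a s')"
    using w_pos by (simp add: u_def fun_eq_iff less_imp_neq[symmetric])
  with feas have "U u" "w v* discount u = (1 - \<alpha>) *\<^sub>R \<gamma>"
    using feasible_scaled_iff[OF w_pos] by auto
  then show ?thesis using objI_eq_objII by blast
qed

end

theorem mainTheorem1:
  fixes A :: "'s::finite \<Rightarrow> 'act set"
    and \<alpha> :: real and \<gamma> :: "real^'s"
    and pbar :: "'s \<Rightarrow> 'act \<Rightarrow> 's \<Rightarrow> real"
    and lp :: "'s \<Rightarrow> nat" and B :: "'s \<Rightarrow> nat \<Rightarrow> 'act \<times> 's \<Rightarrow> real" and b :: "'s \<Rightarrow> nat \<Rightarrow> real"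
    and lsc :: "'s \<Rightarrow> nat" and M :: "'s \<Rightarrow> 'act \<times> 's \<Rightarrow> nat \<Rightarrow> real" and m :: "'s \<Rightarrow> nat \<Rightarrow> real"
    and x :: "'s \<Rightarrow> 'act \<times> 's \<Rightarrow> real" and y :: "'s \<Rightarrow> real"
    and f :: "'s \<Rightarrow> 'act \<Rightarrow> real" and c :: "'s \<Rightarrow> 'act \<Rightarrow> real"
  assumes A_fin: "\<And>s. finite (A s)" and A_ne: "\<And>s. A s \<noteq> {}"
    and alpha: "0 < \<alpha>" "\<alpha> < 1"
    and gamma_pos: "\<And>s. \<gamma> $ s > 0" and gamma_sum: "(\<Sum>s\<in>UNIV. \<gamma> $ s) = 1"
    and pbar_nonneg: "\<And>s a s'. a \<in> A s \<Longrightarrow> pbar s a s' \<ge> 0"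
    and pbar_sum: "\<And>s a. a \<in> A s \<Longrightarrow> (\<Sum>s'\<in>UNIV. pbar s a s') = 1"
    and poly_incl: "\<And>s v. (\<forall>i<lp s. lin A s (B s i) v - b s i \<le> 0) \<Longrightarrow>
        (\<forall>a\<in>A s. (\<Sum>s'\<in>UNIV. v (a, s')) = 0) \<and> (\<forall>a\<in>A s. \<forall>s'. pbar s a s' + v (a, s') \<ge> 0)"
    and f_nonneg: "\<And>s a. a \<in> A s \<Longrightarrow> f s a \<ge> 0"
    and f_sum: "\<And>s. (\<Sum>a\<in>A s. f s a) = 1"
  shows "(\<forall>u. in_U A lp B b lsc M m x y u \<longrightarrow>
            (\<exists>w z. feasII A \<alpha> \<gamma> f pbar lp B b lsc M m x y w z \<and> objII A f c w = objI A \<alpha> \<gamma> f pbar c u))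
       \<and> (\<forall>w z. feasII A \<alpha> \<gamma> f pbar lp B b lsc M m x y w z \<longrightarrow>
            (\<exists>u. in_U A lp B b lsc M m x y u \<and> objI A \<alpha> \<gamma> f pbar c u = objII A f c w))
       \<and> {objI A \<alpha> \<gamma> f pbar c u | u. in_U A lp B b lsc M m x y u}
         = {objII A f c w | w z. feasII A \<alpha> \<gamma> f pbar lp B b lsc M m x y w z}"
proof -
  interpret robust_policy_evaluation A \<alpha> \<gamma> pbar lp B b lsc M m x y f
    by unfold_locales (fact alpha gamma_pos pbar_sum poly_incl f_nonneg f_sum)+
  show ?thesis
    using exists_feasible_same_value[of _ c] exists_U_same_value[of _ _ c] by (auto; metis)
qed

end
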